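(* Let $p\ge1$, $\phi_1,\dots,\phi_p:\mathbb Z\to\mathbb C$, integers $t>s$ and $1\le m\le p$. Then $$\xi^{(m)}_{t,s}=\sum_{j=1}^{p-m+1}\phi_{m+j-1}(s+j)\,\xi_{t,s+j}.$$
   Context: Convention: $\phi_l(t)=0$ for $l>p$. For integers $t>u$ and $1\le m\le p$, $\Phi^{(m)}_{t,u}$ is the $(t-u)\times(t-u)$ lower Hessenberg matrix whose $(i,j)$ entry is: $\phi_{m+i-1}(u+i)$ if $j=1$; $-1$ if $j=i+1$; $\phi_{i-j+1}(u+i)$ if $2\le j\le i$; $0$ if $j>i+1$. For $t\ge u-p+1$: $\xi^{(m)}_{t,u}=\det\Phi^{(m)}_{t,u}$ if $t>u$; $\xi^{(m)}_{t,u}=1$ if $t=u-m+1$; $\xi^{(m)}_{t,u}=0$ if $u-p+1\le t\le u$, $t\ne u-m+1$. The principal determinant is $\xi_{t,u}=\xi^{(1)}_{t,u}$ (so $\xi_{u,u}=1$ and $\xi_{t,u}=0$ for $u-p+1\le t<u$). *)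

theory Defs
  imports Complex_Main "Jordan_Normal_Form.Determinant"
begin

definition phiz :: "nat \<Rightarrow> (nat \<Rightarrow> int \<Rightarrow> complex) \<Rightarrow> nat \<Rightarrow> int \<Rightarrow> complex" where
  "phiz p phi l t = (if l \<le> p then phi l t else 0)"

text \<open>The (t-u) x (t-u) lower Hessenberg matrix Phi^(m)_{t,u}; JNF matrices are 0-indexed,
  so entry (i,j) here is the paper's entry (i+1,j+1).\<close>
definition Phi_mat :: "nat \<Rightarrow> (nat \<Rightarrow> int \<Rightarrow> complex) \<Rightarrow> nat \<Rightarrow> int \<Rightarrow> int \<Rightarrow> complex mat" where
  "Phi_mat p phi m t u = mat (nat (t - u)) (nat (t - u))
     (\<lambda>(i0, j0). let i = i0 + 1; j = j0 + 1 in
        if j = 1 then phiz p phi (m + i - 1) (u + int i)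
        else if j = i + 1 then -1
        else if 2 \<le> j \<and> j \<le> i then phiz p phi (i - j + 1) (u + int i)
        else 0)"

text \<open>xi^(m)_{t,u}, meaningful for t \<ge> u - p + 1.\<close>
definition xi :: "nat \<Rightarrow> (nat \<Rightarrow> int \<Rightarrow> complex) \<Rightarrow> nat \<Rightarrow> int \<Rightarrow> int \<Rightarrow> complex" where
  "xi p phi m t u =
     (if t > u then det (Phi_mat p phi m t u)
      else if t = u - int m + 1 then 1 else 0)"

end

theory Submission
  imports Defs
begin

text \<open>Expand the determinant of Phi^(m)_{t,s} along its first column. Deleting row i and the
  first column leaves a block lower triangular matrix: its upper left i x i block is lower
  triangular with the -1's of the superdiagonal on its diagonal, and its lower right block is
  exactly Phi^(1)_{t,s+i+1}. The two signs (-1)^i cancel, so every cofactor is xi_{t,s+i+1}. The terms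
  with m + i > p vanish by the convention on phi, and padding the sum with the terms for
  s + i \<ge> t is harmless because xi_{t,u} = 0 for u > t.\<close>

lemma det_upper_right_zero_block:
  fixes B :: "'a :: idom mat"
  assumes B: "B \<in> carrier_mat n n" and k: "k \<le> n"
    and zero: "\<And>r c. r < k \<Longrightarrow> k \<le> c \<Longrightarrow> c < n \<Longrightarrow> B $$ (r, c) = 0"
  shows "det B = det (mat k k (\<lambda>(r, c). B $$ (r, c)))
                 * det (mat (n - k) (n - k) (\<lambda>(r, c). B $$ (r + k, c + k)))"
proof -
  have "B = four_block_mat (mat k k (\<lambda>(r, c). B $$ (r, c))) (0\<^sub>m k (n - k))
              (mat (n - k) k (\<lambda>(r, c). B $$ (r + k, c)))
              (mat (n - k) (n - k) (\<lambda>(r, c). B $$ (r + k, c + k)))"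
    using B k zero by (intro eq_matI) (auto simp: index_mat_four_block)
  then show ?thesis
    by (metis det_four_block_mat_upper_right_zero mat_carrier)
qed

lemma Phi_mat_carrier: "Phi_mat p phi m t u \<in> carrier_mat (nat (t - u)) (nat (t - u))"
  unfolding Phi_mat_def by simp

lemma index_Phi_mat:
  assumes "i < nat (t - u)" "j < nat (t - u)"
  shows "Phi_mat p phi m t u $$ (i, j) =
    (if j = 0 then phiz p phi (m + i) (u + int i + 1)
     else if j = i + 1 then -1
     else if j \<le> i then phiz p phi (i - j + 1) (u + int i + 1)
     else 0)"
  using assms unfolding Phi_mat_def by (auto simp: Let_def ac_simps)

lemma det_Phi_mat_principal:
  assumes "u \<le> t"
  shows "det (Phi_mat p phi 1 t u) = xi p phi 1 t u"
  using assms Phi_mat_carrier[of p phi 1 t u] by (auto simp: xi_def)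

lemma xi_principal_below: "t < u \<Longrightarrow> xi p phi 1 t u = 0"
  unfolding xi_def by simp

lemma cofactor_Phi_mat_first_column:
  assumes i: "i < nat (t - s)"
  shows "cofactor (Phi_mat p phi m t s) i 0 = xi p phi 1 t (s + int i + 1)"
proof -
  define n where "n = nat (t - s)"
  define B where "B = mat_delete (Phi_mat p phi m t s) i 0"
  have B: "B \<in> carrier_mat (n - 1) (n - 1)"
    unfolding B_def n_def by (rule mat_delete_carrier[OF Phi_mat_carrier])
  have index_B: "B $$ (r, c) = Phi_mat p phi m t s $$ (if r < i then r else Suc r, Suc c)"
    if "r < n - 1" "c < n - 1" for r c
    using that unfolding B_def mat_delete_def n_def by (simp add: Phi_mat_def)
  have "det (mat i i (\<lambda>(r, c). B $$ (r, c))) = prod_list (replicate i (-1))"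
  proof -
    have "det (mat i i (\<lambda>(r, c). B $$ (r, c))) = prod_list (diag_mat (mat i i (\<lambda>(r, c). B $$ (r, c))))"
      using i index_B by (intro det_lower_triangular[of i]) (auto simp: n_def index_Phi_mat)
    also have "diag_mat (mat i i (\<lambda>(r, c). B $$ (r, c))) = replicate i (-1)"
      using i index_B by (auto intro!: nth_equalityI simp: diag_mat_def n_def index_Phi_mat)
    finally show ?thesis .
  qed
  moreover have "mat (n - 1 - i) (n - 1 - i) (\<lambda>(r, c). B $$ (r + i, c + i))
                   = Phi_mat p phi 1 t (s + int i + 1)"
    using i index_B by (intro eq_matI) (auto simp: n_def Phi_mat_def index_Phi_mat ac_simps)
  ultimately have "det B = (-1) ^ i * xi p phi 1 t (s + int i + 1)"
    using i index_B det_Phi_mat_principal[of "s + int i + 1" t p phi]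
    by (subst det_upper_right_zero_block[OF B, of i]) (auto simp: n_def index_Phi_mat)
  then show ?thesis
    by (simp add: cofactor_def B_def flip: power_add)
qed

lemma det_Phi_mat_first_column_expansion:
  assumes "s < t"
  shows "det (Phi_mat p phi m t s) =
    (\<Sum>i < nat (t - s). phiz p phi (m + i) (s + int i + 1) * xi p phi 1 t (s + int i + 1))"
proof -
  have "0 < nat (t - s)" using assms by simp
  then show ?thesis
    unfolding laplace_expansion_column[OF Phi_mat_carrier \<open>0 < nat (t - s)\<close>]
    by (intro sum.cong) (simp_all add: index_Phi_mat cofactor_Phi_mat_first_column)
qed

theorem proposition4:
  fixes p m :: nat and phi :: "nat \<Rightarrow> int \<Rightarrow> complex" and t s :: int
  assumes "p \<ge> 1" and "1 \<le> m" and "m \<le> p" and "t > s"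
  shows "xi p phi m t s =
    (\<Sum>j = 1..p - m + 1. phiz p phi (m + j - 1) (s + int j) * xi p phi 1 t (s + int j))"
proof -
  define f where "f i = phiz p phi (m + i) (s + int i + 1) * xi p phi 1 t (s + int i + 1)" for i
  define n where "n = nat (t - s)"
  have "xi p phi m t s = (\<Sum>i < n. f i)"
    using assms by (simp add: xi_def f_def n_def det_Phi_mat_first_column_expansion)
  also have "\<dots> = (\<Sum>i < n + (p - m + 1). f i)"
    using xi_principal_below[of t "s + int _ + 1" p phi]
    by (intro sum.mono_neutral_left) (auto simp: f_def n_def)
  also have "\<dots> = (\<Sum>i < p - m + 1. f i)"
    by (intro sum.mono_neutral_right) (auto simp: f_def phiz_def)
  also have "\<dots> = (\<Sum>j = 1..p - m + 1. phiz p phi (m + j - 1) (s + int j) * xi p phi 1 t (s + int j))"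
    by (rule sum.reindex_bij_witness[of _ "\<lambda>j. j - 1" Suc]) (auto simp: f_def ac_simps)
  finally show ?thesis .
qed

end
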